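(* Let $q\in\mathbb{C}$ with $|q|>1$, put $\varepsilon=1-q$, and let $a_1,a_2,b_1,b_2$ be nonzero complex parameters. Let $x_1(t),x_2(t),y_1(t),y_2(t)$ be functions of $t$ (such that all denominators below are nonzero) and define the $4\times4$ matrices \[ M_4(z,t)=\begin{bmatrix}a_1&y_1(t)-\frac{y_2(t)}{qt}&-1&0\\0&b_1&x_2(t)-x_1(t)&-1\\-tz&0&a_2&y_2(t)-y_1(t)\\(x_1(t)-tx_2(t))z&-z&0&b_2\end{bmatrix}, \] \[ B_4(z,t)=\begin{bmatrix}\frac{qta_1}{qt+x_1(qt)y_2(t)}&y_1(t)&-1&0\\0&1+x_1(qt)y_1(t)&-x_1(qt)&0\\-tz&0&\frac{a_2}{1+x_2(qt)y_1(t)}&y_2(t)\\-tx_2(qt)z&0&0&1+x_2(qt)y_2(t)\end{bmatrix}. \] Set $M_4^*(z,t)=\frac{1}{qa_1}M_4(z,t)$ and $B_4^*(z,t)=\frac{qt+x_1(qt)y_2(t)}{qta_1}B_4(z,t)$, and write $M_4^*(z,t)=M_{4,0}^*(t)+zM_{4,1}^*(t)$, $B_4^*(z,t)=B_{4,0}^*(t)+zB_{4,1}^*(t)$ with $M_{4,0}^*,M_{4,1}^*,B_{4,0}^*,B_{4,1}^*$ independent of $z$. For $\zeta$ such that $q^{-1}\varepsilon\zeta I+M_{4,1}^*(t)$ is invertible, define \[ N_4(\zeta,t)=\left(q^{-1}\varepsilon\zeta I+M_{4,1}^*(t)\right)^{-1}\left(\varepsilon\zeta M_{4,0}^*(t)+M_{4,1}^*(t)\right),\qquad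 C_4(\zeta,t)=B_{4,0}^*(t)+\varepsilon^{-1}\zeta^{-1}B_{4,1}^*(t)\left(I-N_4(\zeta,t)\right). \] Then the first column of each of the matrices $N_4(\zeta,t)$ and $C_4(\zeta,t)$ equals the fundamental vector ${}^t[1,0,0,0]$.
   Context: $I$ denotes the $4\times 4$ identity matrix. The matrices $M_4$, $B_4$ form the Lax pair $\Psi_4(qz,t)=M_4(z,t)\Psi_4(z,t)$, $\Psi_4(z,qt)=B_4(z,t)\Psi_4(z,t)$ whose compatibility condition is the paper's system $q$-$P_{(2,2)}$; the matrices $N_4,C_4$ arise from it by a $q$-Laplace transformation. *)

theory Defs
  imports "HOL-Analysis.Analysis"
begin

text \<open>Build a 4x4 complex matrix from a list of rows (row/column indices 0..3).\<close>
definition mat4 :: "complex list list \<Rightarrow> complex^4^4" where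
  "mat4 rs = (\<chi> i j. rs ! nat (Rep_bit0 i) ! nat (Rep_bit0 j))"

definition smat :: "complex \<Rightarrow> complex^4^4 \<Rightarrow> complex^4^4" where
  "smat c A = (\<chi> i j. c * A $ i $ j)"

definition M4 :: "complex \<Rightarrow> complex \<Rightarrow> complex \<Rightarrow> complex \<Rightarrow> complex \<Rightarrow>
   (complex \<Rightarrow> complex) \<Rightarrow> (complex \<Rightarrow> complex) \<Rightarrow> (complex \<Rightarrow> complex) \<Rightarrow> (complex \<Rightarrow> complex) \<Rightarrow>
   complex \<Rightarrow> complex \<Rightarrow> complex^4^4" where
  "M4 q a1 a2 b1 b2 x1 x2 y1 y2 z t = mat4
     [[a1, y1 t - y2 t / (q * t), -1, 0],
      [0, b1, x2 t - x1 t, -1],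
      [- t * z, 0, a2, y2 t - y1 t],
      [(x1 t - t * x2 t) * z, - z, 0, b2]]"

definition B4 :: "complex \<Rightarrow> complex \<Rightarrow> complex \<Rightarrow> complex \<Rightarrow> complex \<Rightarrow>
   (complex \<Rightarrow> complex) \<Rightarrow> (complex \<Rightarrow> complex) \<Rightarrow> (complex \<Rightarrow> complex) \<Rightarrow> (complex \<Rightarrow> complex) \<Rightarrow>
   complex \<Rightarrow> complex \<Rightarrow> complex^4^4" where
  "B4 q a1 a2 b1 b2 x1 x2 y1 y2 z t = mat4
     [[q * t * a1 / (q * t + x1 (q * t) * y2 t), y1 t, -1, 0],
      [0, 1 + x1 (q * t) * y1 t, - x1 (q * t), 0],
      [- t * z, 0, a2 / (1 + x2 (q * t) * y1 t), y2 t],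
      [- t * x2 (q * t) * z, 0, 0, 1 + x2 (q * t) * y2 t]]"

definition M4s where
  "M4s q a1 a2 b1 b2 x1 x2 y1 y2 z t = smat (1 / (q * a1)) (M4 q a1 a2 b1 b2 x1 x2 y1 y2 z t)"

definition B4s where
  "B4s q a1 a2 b1 b2 x1 x2 y1 y2 z t =
     smat ((q * t + x1 (q * t) * y2 t) / (q * t * a1)) (B4 q a1 a2 b1 b2 x1 x2 y1 y2 z t)"

text \<open>Coefficients of z^0 and z^1 of the (affine in z) matrices.\<close>
definition M40 where "M40 q a1 a2 b1 b2 x1 x2 y1 y2 t = M4s q a1 a2 b1 b2 x1 x2 y1 y2 0 t"
definition M41 where "M41 q a1 a2 b1 b2 x1 x2 y1 y2 t =
   M4s q a1 a2 b1 b2 x1 x2 y1 y2 1 t - M4s q a1 a2 b1 b2 x1 x2 y1 y2 0 t"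
definition B40 where "B40 q a1 a2 b1 b2 x1 x2 y1 y2 t = B4s q a1 a2 b1 b2 x1 x2 y1 y2 0 t"
definition B41 where "B41 q a1 a2 b1 b2 x1 x2 y1 y2 t =
   B4s q a1 a2 b1 b2 x1 x2 y1 y2 1 t - B4s q a1 a2 b1 b2 x1 x2 y1 y2 0 t"

definition Nden where
  "Nden q a1 a2 b1 b2 x1 x2 y1 y2 \<zeta> t =
     mat ((1 - q) * \<zeta> / q) + M41 q a1 a2 b1 b2 x1 x2 y1 y2 t"

definition N4 where
  "N4 q a1 a2 b1 b2 x1 x2 y1 y2 \<zeta> t =
     matrix_inv (Nden q a1 a2 b1 b2 x1 x2 y1 y2 \<zeta> t) **
     (smat ((1 - q) * \<zeta>) (M40 q a1 a2 b1 b2 x1 x2 y1 y2 t) + M41 q a1 a2 b1 b2 x1 x2 y1 y2 t)"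

definition C4 where
  "C4 q a1 a2 b1 b2 x1 x2 y1 y2 \<zeta> t =
     B40 q a1 a2 b1 b2 x1 x2 y1 y2 t +
     smat (1 / ((1 - q) * \<zeta>)) (B41 q a1 a2 b1 b2 x1 x2 y1 y2 t **
        (mat 1 - N4 q a1 a2 b1 b2 x1 x2 y1 y2 \<zeta> t))"

end

theory Submission imports Defs begin

text \<open>The first column of M4*(0,t) is e/q (e the first unit vector), so the matrices
  eps zeta M40* + M41* and eps zeta/q I + M41* have the same first column; multiplying by the
  inverse of the latter gives first column e for N4. Hence I - N4, and with it B41* (I - N4), has
  zero first column, so C4 has the first column of B40*, which the normalising factor of B4* makes e.\<close>

lemma Rep_bit0_numerals_4 [simp]:
  "Rep_bit0 (0::4) = 0" "Rep_bit0 (1::4) = 1" "Rep_bit0 (2::4) = 2" "Rep_bit0 (3::4) = 3"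
  by (simp_all add: bit0.Rep_0 bit0.Rep_1 bit0.Rep_numeral)

lemma mat4_nth: "mat4 rs $ i $ j = rs ! nat (Rep_bit0 i) ! nat (Rep_bit0 j)"
  by (simp add: mat4_def)

lemma M4_column_0:
  "M4 q a1 a2 b1 b2 x1 x2 y1 y2 z t $ 0 $ 0 = a1"
  "M4 q a1 a2 b1 b2 x1 x2 y1 y2 z t $ 1 $ 0 = 0"
  "M4 q a1 a2 b1 b2 x1 x2 y1 y2 z t $ 2 $ 0 = - t * z"
  "M4 q a1 a2 b1 b2 x1 x2 y1 y2 z t $ 3 $ 0 = (x1 t - t * x2 t) * z"
  by (simp_all add: M4_def mat4_nth)

lemma B4_column_0:
  "B4 q a1 a2 b1 b2 x1 x2 y1 y2 z t $ 0 $ 0 = q * t * a1 / (q * t + x1 (q * t) * y2 t)"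
  "B4 q a1 a2 b1 b2 x1 x2 y1 y2 z t $ 1 $ 0 = 0"
  "B4 q a1 a2 b1 b2 x1 x2 y1 y2 z t $ 2 $ 0 = - t * z"
  "B4 q a1 a2 b1 b2 x1 x2 y1 y2 z t $ 3 $ 0 = - t * x2 (q * t) * z"
  by (simp_all add: B4_def mat4_nth)

lemma forall_4_from_0: "(\<forall>i::4. P i) \<longleftrightarrow> P 0 \<and> P 1 \<and> P 2 \<and> P 3"
proof -
  have "(4::4) = 0" by simp
  then show ?thesis unfolding forall_4 by metis
qed

lemma matrix_inv_left:
  fixes A :: "'a::semiring_1^'n^'m"
  assumes "invertible A"
  shows "matrix_inv A ** A = mat 1"
  using assms unfolding invertible_def matrix_inv_def by (rule someI_ex[THEN conjunct2])

lemma matrix_inv_mult_column_eq: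
  fixes A :: "'a::semiring_1^'n^'m" and B :: "'a^'n^'m"
  assumes "invertible A" and "\<And>k. B $ k $ j = A $ k $ j"
  shows "(matrix_inv A ** B) $ i $ j = mat 1 $ i $ j"
proof -
  have "(matrix_inv A ** B) $ i $ j = (matrix_inv A ** A) $ i $ j"
    using assms(2) by (simp add: matrix_matrix_mult_def)
  also have "\<dots> = mat 1 $ i $ j"
    by (simp add: matrix_inv_left[OF assms(1)])
  finally show ?thesis .
qed

lemma matrix_mult_column_zero:
  fixes A :: "'a::semiring_1^'n^'m" and B :: "'a^'k^'n"
  assumes "\<And>k. B $ k $ j = 0"
  shows "(A ** B) $ i $ j = 0"
  using assms by (simp add: matrix_matrix_mult_def)

lemma N4_numerator_column_0:
  assumes "q \<noteq> 0" "a1 \<noteq> 0"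
  shows "(smat ((1 - q) * \<zeta>) (M40 q a1 a2 b1 b2 x1 x2 y1 y2 t) + M41 q a1 a2 b1 b2 x1 x2 y1 y2 t) $ k $ 0
      = Nden q a1 a2 b1 b2 x1 x2 y1 y2 \<zeta> t $ k $ 0"
proof -
  have "\<forall>k. (smat ((1 - q) * \<zeta>) (M40 q a1 a2 b1 b2 x1 x2 y1 y2 t) + M41 q a1 a2 b1 b2 x1 x2 y1 y2 t) $ k $ 0
      = Nden q a1 a2 b1 b2 x1 x2 y1 y2 \<zeta> t $ k $ 0"
    unfolding forall_4_from_0 using assms
    by (simp add: Nden_def smat_def M40_def M41_def M4s_def M4_column_0 mat_def)
  then show ?thesis ..
qed

lemma N4_column_0:
  assumes "q \<noteq> 0" "a1 \<noteq> 0" "invertible (Nden q a1 a2 b1 b2 x1 x2 y1 y2 \<zeta> t)"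
  shows "N4 q a1 a2 b1 b2 x1 x2 y1 y2 \<zeta> t $ i $ 0 = (if i = 0 then 1 else 0)"
  using matrix_inv_mult_column_eq[OF assms(3) N4_numerator_column_0[OF assms(1,2)]]
  by (simp add: N4_def mat_def)

lemma B40_column_0:
  assumes "q \<noteq> 0" "a1 \<noteq> 0" "t \<noteq> 0" "q * t + x1 (q * t) * y2 t \<noteq> 0"
  shows "B40 q a1 a2 b1 b2 x1 x2 y1 y2 t $ i $ 0 = (if i = 0 then 1 else 0)"
proof -
  have "\<forall>i. B40 q a1 a2 b1 b2 x1 x2 y1 y2 t $ i $ 0 = (if i = 0 then 1 else 0)"
    unfolding forall_4_from_0 using assms
    by (simp add: B40_def B4s_def B4_column_0 smat_def)
  then show ?thesis ..
qed

lemma C4_column_0: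
  assumes "q \<noteq> 0" "a1 \<noteq> 0" "t \<noteq> 0" "q * t + x1 (q * t) * y2 t \<noteq> 0"
    and "invertible (Nden q a1 a2 b1 b2 x1 x2 y1 y2 \<zeta> t)"
  shows "C4 q a1 a2 b1 b2 x1 x2 y1 y2 \<zeta> t $ i $ 0 = (if i = 0 then 1 else 0)"
proof -
  have "(mat 1 - N4 q a1 a2 b1 b2 x1 x2 y1 y2 \<zeta> t) $ k $ 0 = 0" for k
    using N4_column_0[OF assms(1,2,5)] by (simp add: mat_def)
  then have "(B41 q a1 a2 b1 b2 x1 x2 y1 y2 t ** (mat 1 - N4 q a1 a2 b1 b2 x1 x2 y1 y2 \<zeta> t)) $ i $ 0 = 0"
    by (rule matrix_mult_column_zero)
  then show ?thesis
    using assms by (simp add: C4_def smat_def B40_column_0)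
qed

theorem mainTheorem1:
  fixes q a1 a2 b1 b2 t \<zeta> :: complex
    and x1 x2 y1 y2 :: "complex \<Rightarrow> complex"
  assumes "norm q > 1"
    and "a1 \<noteq> 0" "a2 \<noteq> 0" "b1 \<noteq> 0" "b2 \<noteq> 0"
    and "t \<noteq> 0"
    and "q * t + x1 (q * t) * y2 t \<noteq> 0"
    and "1 + x2 (q * t) * y1 t \<noteq> 0"
    and "\<zeta> \<noteq> 0"
    and "invertible (Nden q a1 a2 b1 b2 x1 x2 y1 y2 \<zeta> t)"
  shows "(\<forall>i. N4 q a1 a2 b1 b2 x1 x2 y1 y2 \<zeta> t $ i $ 0 = (if i = 0 then 1 else 0))
       \<and> (\<forall>i. C4 q a1 a2 b1 b2 x1 x2 y1 y2 \<zeta> t $ i $ 0 = (if i = 0 then 1 else 0))"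
proof -
  have "q \<noteq> 0" using assms(1) by auto
  with assms show ?thesis
    by (simp add: N4_column_0 C4_column_0)
qed

end
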